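(* For every $g\in\mathbb R$ and all $\eta,\zeta\in\mathcal F^{\mathcal S}$, \[ \ell_{\mathrm C,\infty}(\mathcal T_g\eta,\mathcal T_g\zeta)\le\ell_{\mathrm C,\infty}(\eta,\zeta). \]
   Context: Finite state set $\mathcal S=\{1,\dots,m\}$ and transition matrix $P=(P_{ij})$ on $\mathcal S$ (induced by a fixed policy in a finite MDP). $R_{ij}$ is the finite-valued $[0,1]$-valued random one-step reward conditioned on transition $i\to j$; for $g\in\mathbb R$, $\nu^{(g)}_{ij}:=\mathrm{Law}(R_{ij}-g)$. $\mathcal F^{\mathcal S}$ is the set of families $\eta=(\eta_i)_{i\in\mathcal S}$ of probability laws on $\mathbb R$ with finite second moment, and $(\mathcal T_g\eta)_i:=\sum_jP_{ij}(\nu^{(g)}_{ij}\ast\eta_j)$. Cramér distance $\ell_{\mathrm C}(\eta,\zeta):=(\int_{\mathbb R}(F_\eta-F_\zeta)^2\,\mathrm dx)^{1/2}$ with $F$ the cdfs, and $\ell_{\mathrm C,\infty}(\eta,\zeta):=\max_i\ell_{\mathrm C}(\eta_i,\zeta_i)$. *)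

theory Defs
  imports "HOL-Probability.Probability"
begin

definition law2 :: "real measure \<Rightarrow> bool" where
  "law2 M \<longleftrightarrow> prob_space M \<and> sets M = sets borel \<and> integrable M (\<lambda>x. x\<^sup>2)"

definition cramer :: "real measure \<Rightarrow> real measure \<Rightarrow> real" where
  "cramer M N = sqrt (\<integral>x. (cdf M x - cdf N x)\<^sup>2 \<partial>lborel)"

definition cramer_inf :: "('s::finite \<Rightarrow> real measure) \<Rightarrow> ('s \<Rightarrow> real measure) \<Rightarrow> real" where
  "cramer_inf \<eta> \<zeta> = Max (range (\<lambda>i. cramer (\<eta> i) (\<zeta> i)))"

definition nu :: "('s \<Rightarrow> 's \<Rightarrow> real pmf) \<Rightarrow> real \<Rightarrow> 's \<Rightarrow> 's \<Rightarrow> real measure" where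
  "nu R g i j = measure_pmf (map_pmf (\<lambda>r. r - g) (R i j))"

text \<open>Distributional Bellman operator: (T_g eta)_i = sum_j P_ij (nu_ij * eta_j).\<close>
definition bellman ::
  "('s::finite \<Rightarrow> 's \<Rightarrow> real) \<Rightarrow> ('s \<Rightarrow> 's \<Rightarrow> real pmf) \<Rightarrow> real
     \<Rightarrow> ('s \<Rightarrow> real measure) \<Rightarrow> 's \<Rightarrow> real measure" where
  "bellman P R g \<eta> i = measure_of UNIV (sets borel)
     (\<lambda>A. \<Sum>j\<in>UNIV. ennreal (P i j) * emeasure (nu R g i j \<star> \<eta> j) A)"

end

theory Submission
  imports Defs
begin

(* At state i and point x the cdf of the Bellman image is
   sum_j P i j * sum_r p_ij(r) * F_(eta j)(x - (r - g)),
   so the difference of the cdfs of (T_g eta)_i and (T_g zeta)_i is a convex combination of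
   translates of the differences F_(eta j) - F_(zeta j). Jensen's inequality for the square and
   the translation invariance of Lebesgue measure then bound the squared Cramer distance at i by
   sum_j P i j * cramer (eta j) (zeta j)^2, hence by the squared maximum. Finite second moments
   enter only through Chebyshev's inequality, which makes the Cramer integrands integrable; of
   the rewards only the finiteness of their supports is used. *)

lemma square_convex_combination_le:
  fixes w a :: "'i \<Rightarrow> real"
  assumes "finite I" "\<And>i. i \<in> I \<Longrightarrow> 0 \<le> w i" "sum w I = 1"
  shows "(\<Sum>i\<in>I. w i * a i)\<^sup>2 \<le> (\<Sum>i\<in>I. w i * (a i)\<^sup>2)"
proof -
  have "I \<noteq> {}" using assms(3) by auto
  then show ?thesis
    using convex_on_sum[OF assms(1) _ convex_power2 assms(3) assms(2)] by simp
qed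

lemma
  fixes w :: "'i \<Rightarrow> real" and f :: "'i \<Rightarrow> real \<Rightarrow> real"
  assumes "finite I" "\<And>i. i \<in> I \<Longrightarrow> 0 \<le> w i" "sum w I = 1"
    and f_meas: "\<And>i. i \<in> I \<Longrightarrow> f i \<in> borel_measurable lborel"
    and f_int: "\<And>i. i \<in> I \<Longrightarrow> integrable lborel (\<lambda>x. (f i x)\<^sup>2)"
  shows integrable_square_convex_combination: "integrable lborel (\<lambda>x. (\<Sum>i\<in>I. w i * f i x)\<^sup>2)"
    and integral_square_convex_combination_le:
      "(\<integral>x. (\<Sum>i\<in>I. w i * f i x)\<^sup>2 \<partial>lborel) \<le> (\<Sum>i\<in>I. w i * (\<integral>x. (f i x)\<^sup>2 \<partial>lborel))"
proof -
  have bound_int: "integrable lborel (\<lambda>x. \<Sum>i\<in>I. w i * (f i x)\<^sup>2)"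
    using f_int by auto
  have le: "(\<Sum>i\<in>I. w i * f i x)\<^sup>2 \<le> (\<Sum>i\<in>I. w i * (f i x)\<^sup>2)" for x
    using assms(1-3) by (rule square_convex_combination_le)
  have meas: "(\<lambda>x. (\<Sum>i\<in>I. w i * f i x)\<^sup>2) \<in> borel_measurable lborel"
    using f_meas by measurable
  show int: "integrable lborel (\<lambda>x. (\<Sum>i\<in>I. w i * f i x)\<^sup>2)"
    using bound_int meas by (rule Bochner_Integration.integrable_bound) (auto intro!: AE_I2 order.trans[OF le])
  have "(\<integral>x. (\<Sum>i\<in>I. w i * f i x)\<^sup>2 \<partial>lborel) \<le> (\<integral>x. (\<Sum>i\<in>I. w i * (f i x)\<^sup>2) \<partial>lborel)"
    using int bound_int le by (rule integral_mono)
  also have "\<dots> = (\<Sum>i\<in>I. w i * (\<integral>x. (f i x)\<^sup>2 \<partial>lborel))"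
    using f_int by (subst Bochner_Integration.integral_sum) auto
  finally show "(\<integral>x. (\<Sum>i\<in>I. w i * f i x)\<^sup>2 \<partial>lborel) \<le> (\<Sum>i\<in>I. w i * (\<integral>x. (f i x)\<^sup>2 \<partial>lborel))" .
qed

lemma
  fixes f :: "real \<Rightarrow> 'a::{banach, second_countable_topology}"
  shows integrable_lborel_translate: "integrable lborel f \<Longrightarrow> integrable lborel (\<lambda>x. f (x - t))"
    and integral_lborel_translate: "(\<integral>x. f (x - t) \<partial>lborel) = (\<integral>x. f x \<partial>lborel)"
proof -
  have translate: "(\<lambda>x. f (x - t)) = (\<lambda>x. f (- t + 1 * x))"
    by simp
  show "integrable lborel f \<Longrightarrow> integrable lborel (\<lambda>x. f (x - t))"
    unfolding translate by (rule lborel_integrable_real_affine) simp_all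
  show "(\<integral>x. f (x - t) \<partial>lborel) = (\<integral>x. f x \<partial>lborel)"
    unfolding translate by (subst lborel_integral_real_affine[of 1 f "- t"]) simp_all
qed

lemma
  fixes Q :: "'a pmf" and s :: "'a \<Rightarrow> real" and D :: "real \<Rightarrow> real"
  assumes Q_fin: "finite (set_pmf Q)" and D_meas: "D \<in> borel_measurable borel"
    and D_int: "integrable lborel (\<lambda>x. (D x)\<^sup>2)"
  shows integrable_square_translate_mixture:
      "integrable lborel (\<lambda>x. (\<Sum>r\<in>set_pmf Q. pmf Q r * D (x - s r))\<^sup>2)"
    and integral_square_translate_mixture_le:
      "(\<integral>x. (\<Sum>r\<in>set_pmf Q. pmf Q r * D (x - s r))\<^sup>2 \<partial>lborel) \<le> (\<integral>x. (D x)\<^sup>2 \<partial>lborel)"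
proof -
  have weights: "sum (pmf Q) (set_pmf Q) = 1"
    using Q_fin by (rule sum_pmf_eq_1) simp
  have meas: "(\<lambda>x. D (x - s r)) \<in> borel_measurable lborel" for r
    using D_meas by measurable
  have int: "integrable lborel (\<lambda>x. (D (x - s r))\<^sup>2)" for r
    using integrable_lborel_translate[OF D_int] .
  show "integrable lborel (\<lambda>x. (\<Sum>r\<in>set_pmf Q. pmf Q r * D (x - s r))\<^sup>2)"
    using Q_fin _ weights meas int by (rule integrable_square_convex_combination) simp
  have "(\<integral>x. (\<Sum>r\<in>set_pmf Q. pmf Q r * D (x - s r))\<^sup>2 \<partial>lborel)
      \<le> (\<Sum>r\<in>set_pmf Q. pmf Q r * (\<integral>x. (D (x - s r))\<^sup>2 \<partial>lborel))"
    using Q_fin _ weights meas int by (rule integral_square_convex_combination_le) simp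
  also have "\<dots> = (\<integral>x. (D x)\<^sup>2 \<partial>lborel)"
    by (simp add: integral_lborel_translate[where f="\<lambda>x. (D x)\<^sup>2"] sum_distrib_right[symmetric] weights)
  finally show "(\<integral>x. (\<Sum>r\<in>set_pmf Q. pmf Q r * D (x - s r))\<^sup>2 \<partial>lborel) \<le> (\<integral>x. (D x)\<^sup>2 \<partial>lborel)" .
qed

lemma real_distribution_law2: "law2 M \<Longrightarrow> real_distribution M"
  by (simp add: law2_def real_distribution_def real_distribution_axioms_def)

lemma borel_measurable_cdf:
  assumes "real_distribution M"
  shows "cdf M \<in> borel_measurable borel"
proof -
  interpret M: real_distribution M by fact
  show ?thesis
    by (rule borel_measurable_mono) (simp add: mono_def M.cdf_nondecreasing)
qed

lemma (in real_distribution) cdf_le_measure_square_ge: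
  assumes "x \<le> 0"
  shows "cdf M x \<le> measure M {y. x\<^sup>2 \<le> y\<^sup>2}"
  unfolding cdf_def
  by (rule finite_measure_mono) (use assms in \<open>auto simp flip: abs_le_square_iff\<close>)

lemma (in real_distribution) one_minus_cdf_le_measure_square_ge:
  assumes "0 \<le> x"
  shows "1 - cdf M x \<le> measure M {y. x\<^sup>2 \<le> y\<^sup>2}"
proof -
  have "1 - cdf M x = measure M (UNIV - {..x})"
    by (simp add: cdf_def prob_compl[symmetric])
  also have "\<dots> \<le> measure M {y. x\<^sup>2 \<le> y\<^sup>2}"
    by (rule finite_measure_mono) (use assms in \<open>auto simp flip: abs_le_square_iff\<close>)
  finally show ?thesis .
qed

lemma abs_cdf_diff_le_measure_square_ge:
  assumes "real_distribution M" "real_distribution N"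
  shows "\<bar>cdf M x - cdf N x\<bar> \<le> measure M {y. x\<^sup>2 \<le> y\<^sup>2} + measure N {y. x\<^sup>2 \<le> y\<^sup>2}"
proof (cases "x \<le> 0")
  case True
  then show ?thesis
    using assms[THEN real_distribution.cdf_le_measure_square_ge, of x]
      assms[THEN real_distribution.finite_borel_measure_M, THEN finite_borel_measure.cdf_nonneg, of x]
    by linarith
next
  case False
  then show ?thesis
    using assms[THEN real_distribution.one_minus_cdf_le_measure_square_ge, of x]
      assms[THEN real_distribution.cdf_bounded_prob, of x]
    by linarith
qed

lemma measure_square_ge_le:
  assumes "law2 M"
  shows "measure M {y. x\<^sup>2 \<le> y\<^sup>2} \<le> (1 + (\<integral>y. y\<^sup>2 \<partial>M)) * inverse (1 + x\<^sup>2)"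
proof -
  interpret M: real_distribution M
    using assms by (rule real_distribution_law2)
  define t where "t = measure M {y. x\<^sup>2 \<le> y\<^sup>2}"
  have "x\<^sup>2 * t \<le> (\<integral>y. y\<^sup>2 \<partial>M)"
  proof (cases "x = 0")
    case True
    then show ?thesis by simp
  next
    case False
    have "measure M {y \<in> space M. x\<^sup>2 \<le> y\<^sup>2} \<le> (\<integral>y. y\<^sup>2 \<partial>M) / x\<^sup>2"
      using assms False by (intro integral_Markov_inequality_measure[of _ _ "{}"]) (auto simp: law2_def)
    then show ?thesis
      using False by (simp add: t_def field_simps)
  qed
  moreover have "t \<le> 1"
    by (simp add: t_def)
  ultimately have "(1 + x\<^sup>2) * t \<le> 1 + (\<integral>y. y\<^sup>2 \<partial>M)"
    by (simp add: algebra_simps)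
  then show ?thesis
    by (simp add: t_def field_simps add_pos_nonneg)
qed

lemma integrable_cramer_integrand:
  assumes M: "law2 M" and N: "law2 N"
  shows "integrable lborel (\<lambda>x. (cdf M x - cdf N x)\<^sup>2)"
proof -
  have distr: "real_distribution M" "real_distribution N"
    using M N by (simp_all add: real_distribution_law2)
  have [measurable]: "cdf M \<in> borel_measurable borel" "cdf N \<in> borel_measurable borel"
    using distr by (simp_all add: borel_measurable_cdf)
  define C where "C = 2 + (\<integral>y. y\<^sup>2 \<partial>M) + (\<integral>y. y\<^sup>2 \<partial>N)"
  have bound: "(cdf M x - cdf N x)\<^sup>2 \<le> C * inverse (1 + x\<^sup>2)" for x
  proof -
    have "\<bar>cdf M x - cdf N x\<bar> \<le> 1"
      using distr[THEN real_distribution.cdf_bounded_prob, of x]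
        measure_nonneg[of M "{..x}"] measure_nonneg[of N "{..x}"]
      unfolding cdf_def by linarith
    then have "(cdf M x - cdf N x)\<^sup>2 \<le> \<bar>cdf M x - cdf N x\<bar>"
      by (metis abs_ge_zero mult_left_le power2_abs power2_eq_square)
    also have "\<dots> \<le> C * inverse (1 + x\<^sup>2)"
      using abs_cdf_diff_le_measure_square_ge[OF distr, of x]
        measure_square_ge_le[OF M, of x] measure_square_ge_le[OF N, of x]
      by (simp add: C_def algebra_simps)
    finally show ?thesis .
  qed
  have "integrable lborel (\<lambda>x. C * inverse (1 + x\<^sup>2))"
    using integrable_inverse_1_plus_square by (simp add: set_integrable_def)
  then show ?thesis
    by (rule Bochner_Integration.integrable_bound) (auto intro!: AE_I2 order.trans[OF bound abs_ge_self])
qed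

lemma cramer_nonneg: "0 \<le> cramer M N"
  by (simp add: cramer_def)

lemma power2_cramer: "(cramer M N)\<^sup>2 = (\<integral>x. (cdf M x - cdf N x)\<^sup>2 \<partial>lborel)"
  by (simp add: cramer_def)

(* The library's convolution_emeasure does not apply: measure_pmf Q carries the discrete
   sigma-algebra, not the Borel one. *)
lemma emeasure_measure_pmf_convolution:
  fixes Q :: "real pmf" and M :: "real measure"
  assumes "sigma_finite_measure M" and sets_M: "sets M = sets borel" and A: "A \<in> sets borel"
  shows "emeasure (measure_pmf Q \<star> M) A = (\<integral>\<^sup>+r. emeasure M {y. r + y \<in> A} \<partial>measure_pmf Q)"
proof -
  interpret M: sigma_finite_measure M by fact
  have "fst \<in> borel_measurable (measure_pmf Q \<Otimes>\<^sub>M M)"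
    by (rule measurable_compose[OF measurable_fst]) simp
  moreover have "snd \<in> borel_measurable (measure_pmf Q \<Otimes>\<^sub>M M)"
    by (rule measurable_compose[OF measurable_snd measurable_ident_sets[OF sets_M]])
  ultimately have plus: "(\<lambda>(x, y). x + y) \<in> borel_measurable (measure_pmf Q \<Otimes>\<^sub>M M)"
    unfolding case_prod_beta' by (rule borel_measurable_add)
  have "emeasure (measure_pmf Q \<star> M) A
      = emeasure (measure_pmf Q \<Otimes>\<^sub>M M) ((\<lambda>(x, y). x + y) -` A \<inter> space (measure_pmf Q \<Otimes>\<^sub>M M))"
    unfolding convolution_def using plus A by (simp add: emeasure_distr)
  also have "\<dots> = (\<integral>\<^sup>+r. emeasure M (Pair r -` ((\<lambda>(x, y). x + y) -` A \<inter> space (measure_pmf Q \<Otimes>\<^sub>M M))) \<partial>measure_pmf Q)"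
    using measurable_sets[OF plus A] by (rule M.emeasure_pair_measure_alt)
  also have "\<dots> = (\<integral>\<^sup>+r. emeasure M {y. r + y \<in> A} \<partial>measure_pmf Q)"
    using sets_eq_imp_space_eq[OF sets_M]
    by (intro nn_integral_cong arg_cong2[where f=emeasure]) (auto simp: space_pair_measure)
  finally show ?thesis .
qed

lemma emeasure_map_pmf_convolution_atMost:
  fixes Q :: "'a pmf" and h :: "'a \<Rightarrow> real"
  assumes "real_distribution M" and "finite (set_pmf Q)"
  shows "emeasure (measure_pmf (map_pmf h Q) \<star> M) {..x} = ennreal (\<Sum>r\<in>set_pmf Q. pmf Q r * cdf M (x - h r))"
proof -
  interpret M: real_distribution M by fact
  have "emeasure (measure_pmf (map_pmf h Q) \<star> M) {..x} = (\<integral>\<^sup>+r. emeasure M {y. h r + y \<le> x} \<partial>measure_pmf Q)"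
    by (subst emeasure_measure_pmf_convolution) (auto simp: M.sigma_finite_measure)
  also have "\<dots> = (\<Sum>r\<in>set_pmf Q. emeasure M {y. h r + y \<le> x} * pmf Q r)"
    using assms(2) by (rule nn_integral_measure_pmf_finite) simp
  also have "\<dots> = (\<Sum>r\<in>set_pmf Q. ennreal (pmf Q r * cdf M (x - h r)))"
  proof (intro sum.cong refl)
    fix r
    have "{y. h r + y \<le> x} = {..x - h r}" by auto
    then show "emeasure M {y. h r + y \<le> x} * pmf Q r = ennreal (pmf Q r * cdf M (x - h r))"
      by (simp add: M.emeasure_eq_measure cdf_def ennreal_mult'' mult.commute)
  qed
  also have "\<dots> = ennreal (\<Sum>r\<in>set_pmf Q. pmf Q r * cdf M (x - h r))"
    by (rule sum_ennreal) (simp add: M.cdf_nonneg)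
  finally show ?thesis .
qed

lemma emeasure_bellman:
  assumes "A \<in> sets borel"
  shows "emeasure (bellman P R g \<eta> i) A = (\<Sum>j\<in>UNIV. ennreal (P i j) * emeasure (nu R g i j \<star> \<eta> j) A)"
  unfolding bellman_def
proof (rule emeasure_measure_of_sigma[OF _ _ _ assms])
  show "sigma_algebra UNIV (sets borel)"
    using sets.sigma_algebra_axioms[of borel] by simp
  show "positive (sets borel) (\<lambda>A. \<Sum>j\<in>UNIV. ennreal (P i j) * emeasure (nu R g i j \<star> \<eta> j) A)"
    by (simp add: positive_def)
  show "countably_additive (sets borel) (\<lambda>A. \<Sum>j\<in>UNIV. ennreal (P i j) * emeasure (nu R g i j \<star> \<eta> j) A)"
    by (auto simp: countably_additive_def suminf_sum[OF summableI] suminf_emeasure)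
qed

lemma cdf_bellman:
  assumes P_nonneg: "\<And>i j. P i j \<ge> 0"
    and R_fin: "\<And>i j. finite (set_pmf (R i j))"
    and \<eta>: "\<And>j. real_distribution (\<eta> j)"
  shows "cdf (bellman P R g \<eta> i) x
    = (\<Sum>j\<in>UNIV. P i j * (\<Sum>r\<in>set_pmf (R i j). pmf (R i j) r * cdf (\<eta> j) (x - (r - g))))"
proof -
  have nonneg: "0 \<le> P i j * (\<Sum>r\<in>set_pmf (R i j). pmf (R i j) r * cdf (\<eta> j) (x - (r - g)))" for j
    using P_nonneg by (intro mult_nonneg_nonneg sum_nonneg) (auto simp: cdf_def)
  have "emeasure (bellman P R g \<eta> i) {..x} = (\<Sum>j\<in>UNIV. ennreal (P i j) * emeasure (nu R g i j \<star> \<eta> j) {..x})"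
    by (simp add: emeasure_bellman)
  also have "\<dots> = (\<Sum>j\<in>UNIV. ennreal (P i j * (\<Sum>r\<in>set_pmf (R i j). pmf (R i j) r * cdf (\<eta> j) (x - (r - g)))))"
    unfolding nu_def emeasure_map_pmf_convolution_atMost[OF \<eta> R_fin]
    using P_nonneg nonneg by (simp add: ennreal_mult sum_nonneg cdf_def)
  also have "\<dots> = ennreal (\<Sum>j\<in>UNIV. P i j * (\<Sum>r\<in>set_pmf (R i j). pmf (R i j) r * cdf (\<eta> j) (x - (r - g))))"
    using nonneg by (rule sum_ennreal)
  finally show ?thesis
    using nonneg by (simp add: cdf_def measure_def sum_nonneg)
qed

lemma power2_cramer_bellman_le:
  assumes P_nonneg: "\<And>i j. P i j \<ge> 0"
    and P_stoch: "\<And>i. (\<Sum>j\<in>UNIV. P i j) = 1"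
    and R_fin: "\<And>i j. finite (set_pmf (R i j))"
    and \<eta>: "\<And>j. law2 (\<eta> j)"
    and \<zeta>: "\<And>j. law2 (\<zeta> j)"
  shows "(cramer (bellman P R g \<eta> i) (bellman P R g \<zeta> i))\<^sup>2 \<le> (\<Sum>j\<in>UNIV. P i j * (cramer (\<eta> j) (\<zeta> j))\<^sup>2)"
proof -
  define D where "D j x = cdf (\<eta> j) x - cdf (\<zeta> j) x" for j x
  define H where "H j x = (\<Sum>r\<in>set_pmf (R i j). pmf (R i j) r * D j (x - (r - g)))" for j x
  have distr: "real_distribution (\<eta> j)" "real_distribution (\<zeta> j)" for j
    using \<eta> \<zeta> by (simp_all add: real_distribution_law2)
  have D_meas: "D j \<in> borel_measurable borel" for j
    using borel_measurable_cdf[OF distr(1)] borel_measurable_cdf[OF distr(2)]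
    unfolding D_def by measurable
  have D_int: "integrable lborel (\<lambda>x. (D j x)\<^sup>2)" for j
    unfolding D_def using \<eta> \<zeta> by (rule integrable_cramer_integrand)
  have H_meas: "H j \<in> borel_measurable borel" for j
    unfolding H_def using D_meas by measurable
  have H_int: "integrable lborel (\<lambda>x. (H j x)\<^sup>2)" for j
    unfolding H_def using R_fin D_meas D_int by (rule integrable_square_translate_mixture)
  have "cdf (bellman P R g \<eta> i) x - cdf (bellman P R g \<zeta> i) x = (\<Sum>j\<in>UNIV. P i j * H j x)" for x
    unfolding cdf_bellman[OF P_nonneg R_fin distr(1)] cdf_bellman[OF P_nonneg R_fin distr(2)] H_def D_def
    by (simp add: sum_subtractf[symmetric] right_diff_distrib[symmetric])
  then have "(cramer (bellman P R g \<eta> i) (bellman P R g \<zeta> i))\<^sup>2 = (\<integral>x. (\<Sum>j\<in>UNIV. P i j * H j x)\<^sup>2 \<partial>lborel)"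
    by (simp add: power2_cramer)
  also have "\<dots> \<le> (\<Sum>j\<in>UNIV. P i j * (\<integral>x. (H j x)\<^sup>2 \<partial>lborel))"
    by (rule integral_square_convex_combination_le) (simp_all add: P_nonneg P_stoch H_meas H_int)
  also have "\<dots> \<le> (\<Sum>j\<in>UNIV. P i j * (\<integral>x. (D j x)\<^sup>2 \<partial>lborel))"
    unfolding H_def using R_fin D_meas D_int
    by (intro sum_mono mult_left_mono P_nonneg integral_square_translate_mixture_le)
  also have "\<dots> = (\<Sum>j\<in>UNIV. P i j * (cramer (\<eta> j) (\<zeta> j))\<^sup>2)"
    by (simp add: power2_cramer D_def)
  finally show ?thesis .
qed

theorem lemma3:
  fixes P :: "'s::finite \<Rightarrow> 's \<Rightarrow> real"
    and R :: "'s \<Rightarrow> 's \<Rightarrow> real pmf"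
    and g :: real
    and \<eta> \<zeta> :: "'s \<Rightarrow> real measure"
  assumes P_nonneg: "\<And>i j. P i j \<ge> 0"
    and P_stoch: "\<And>i. (\<Sum>j\<in>UNIV. P i j) = 1"
    and R_fin: "\<And>i j. finite (set_pmf (R i j))"
    and R_range: "\<And>i j. set_pmf (R i j) \<subseteq> {0..1}"
    and \<eta>: "\<And>i. law2 (\<eta> i)"
    and \<zeta>: "\<And>i. law2 (\<zeta> i)"
  shows "cramer_inf (bellman P R g \<eta>) (bellman P R g \<zeta>) \<le> cramer_inf \<eta> \<zeta>"
proof -
  define c where "c = cramer_inf \<eta> \<zeta>"
  have cramer_le_c: "cramer (\<eta> j) (\<zeta> j) \<le> c" for j
    unfolding c_def cramer_inf_def by (rule Max_ge) auto
  have "cramer (bellman P R g \<eta> i) (bellman P R g \<zeta> i) \<le> c" for i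
  proof (rule power2_le_imp_le)
    have "(cramer (bellman P R g \<eta> i) (bellman P R g \<zeta> i))\<^sup>2 \<le> (\<Sum>j\<in>UNIV. P i j * (cramer (\<eta> j) (\<zeta> j))\<^sup>2)"
      using P_nonneg P_stoch R_fin \<eta> \<zeta> by (rule power2_cramer_bellman_le)
    also have "\<dots> \<le> (\<Sum>j\<in>UNIV. P i j * c\<^sup>2)"
      using cramer_le_c cramer_nonneg
      by (intro sum_mono mult_left_mono P_nonneg power_mono)
    also have "\<dots> = c\<^sup>2"
      by (simp add: sum_distrib_right[symmetric] P_stoch)
    finally show "(cramer (bellman P R g \<eta> i) (bellman P R g \<zeta> i))\<^sup>2 \<le> c\<^sup>2" .
    show "0 \<le> c"
      using cramer_le_c cramer_nonneg order.trans by blast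
  qed
  then have "Max (range (\<lambda>i. cramer (bellman P R g \<eta> i) (bellman P R g \<zeta> i))) \<le> c"
    by (intro Max.boundedI) auto
  then show ?thesis
    by (simp add: cramer_inf_def c_def)
qed

end
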